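(* Let $\Omega$ be a finite set and let $f_1,\ldots,f_n\in\mathbb{R}^{\Omega}$ be gambles. Let $$\mathcal M=\{p\in\mathbb{R}^{\Omega}: p\cdot f_i\ge 0 \text{ for } i=1,\ldots,n,\ p\cdot 1_\Omega=1\}$$ be a nonempty credal set (a nonempty, closed, convex set of probability mass vectors). Let $E\in\mathcal M$, let $I=\{i: E\cdot f_i=0\}$, and for $i\in I$ let $f'_i=f_i-\frac{f_i\cdot 1_\Omega}{|\Omega|}1_\Omega$ (so that $f_i-f'_i$ is constant and $f'_i\cdot 1_\Omega=0$). For $\underline{\alpha}=(\alpha_i)_{i\in I}$ with $\alpha_i\ge 0$ and $\beta\in\mathbb{R}$ put $h(\underline{\alpha},\beta)=\sum_{i\in I}\alpha_i f'_i+\beta 1_\Omega$. Let $P$ be a linear prevision (probability mass vector) on $\Omega$. Then $$\max_{(\underline{\alpha},\beta)}\frac{|E\cdot h(\underline{\alpha},\beta)-P\cdot h(\underline{\alpha},\beta)|}{\|h(\underline{\alpha},\beta)\|}=\max_{\underline{\alpha}}\frac{|E\cdot h(\underline{\alpha},0)-P\cdot h(\underline{\alpha},0)|}{\|h(\underline{\alpha},0)\|},$$ where the maxima range over those parameters for which the denominator is nonzero.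
   Context: $f\cdot g=\sum_{x\in\Omega}f(x)g(x)$ is the standard inner product on $\mathbb{R}^{\Omega}$, $\|f\|=\sqrt{f\cdot f}$ the Euclidean norm, and $1_\Omega$ the constant vector $1$. A linear prevision is identified with a probability mass vector $P$ and acts on gambles by $P(f)=P\cdot f$. *)

theory Defs
  imports "HOL-Analysis.Analysis"
begin

text \<open>Gambles and mass vectors on a finite set Omega are vectors of type real^'w,
  with 'w a finite type playing the role of Omega. The inner product is the library's
  (standard) one, the norm is the Euclidean norm, and 1 :: real^'w is the constant vector 1.\<close>

definition credal_set :: "nat \<Rightarrow> (nat \<Rightarrow> real^'w::finite) \<Rightarrow> (real^'w) set" where
  "credal_set n f = {p. (\<forall>i<n. p \<bullet> f i \<ge> 0) \<and> p \<bullet> 1 = 1}"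

definition centered :: "real^'w::finite \<Rightarrow> real^'w" where
  "centered g = g - ((g \<bullet> 1) / real CARD('w)) *\<^sub>R 1"

definition hvec :: "nat set \<Rightarrow> (nat \<Rightarrow> real^'w::finite) \<Rightarrow> (nat \<Rightarrow> real) \<Rightarrow> real \<Rightarrow> real^'w" where
  "hvec I f \<alpha> \<beta> = (\<Sum>i\<in>I. \<alpha> i *\<^sub>R centered (f i)) + \<beta> *\<^sub>R 1"

definition dev_ratio :: "real^'w::finite \<Rightarrow> real^'w \<Rightarrow> real^'w \<Rightarrow> real" where
  "dev_ratio E P g = \<bar>E \<bullet> g - P \<bullet> g\<bar> / norm g"

definition is_prob_mass :: "real^'w::finite \<Rightarrow> bool" where
  "is_prob_mass p \<longleftrightarrow> (\<forall>x. p $ x \<ge> 0) \<and> (\<Sum>x\<in>UNIV. p $ x) = 1"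

end

theory Submission
  imports Defs
begin

text \<open>Put \<open>c = E - P\<close>. Since \<open>E\<close> and \<open>P\<close> are both normalised, \<open>c \<bullet> 1 = 0\<close>, and every
  \<open>h(\<alpha>, 0)\<close> is orthogonal to \<open>1\<close> as well. Hence adding \<open>\<beta> *\<^sub>R 1\<close> leaves the numerator
  \<open>\<bar>c \<bullet> h\<bar>\<close> unchanged and, by Pythagoras, can only enlarge the norm, so the ratio over all
  \<open>(\<alpha>, \<beta>)\<close> is dominated by the ratio at \<open>\<beta> = 0\<close>. The vectors \<open>h(\<alpha>, 0)\<close> form the closed
  convex cone generated by the finitely many \<open>f'\<^sub>i\<close>; the ratio is scale invariant, so its
  supremum over the nonzero points of that cone is attained on the compact unit sphere of the cone.\<close>

lemma nonneg_combination_in_convex_cone_hull: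
  assumes "finite J" "J \<subseteq> I" "\<forall>i\<in>J. 0 \<le> a i"
  shows "(\<Sum>i\<in>J. a i *\<^sub>R g i) \<in> convex_cone hull (g ` I)"
  using assms
proof (induction J rule: finite_induct)
  case empty
  then show ?case by (simp add: convex_cone_hull_contains_0)
next
  case (insert j J)
  have "g j \<in> convex_cone hull (g ` I)"
    using insert by (intro hull_inc) auto
  then have "a j *\<^sub>R g j \<in> convex_cone hull (g ` I)"
    using insert by (intro convex_cone_hull_mul) auto
  then show ?case
    using insert by (simp add: convex_cone_hull_add)
qed

lemma nonneg_combinations_eq_convex_cone_hull:
  fixes g :: "'i \<Rightarrow> 'a::real_vector"
  assumes "finite I"
  shows "{\<Sum>i\<in>I. a i *\<^sub>R g i | a. \<forall>i\<in>I. 0 \<le> a i} = convex_cone hull (g ` I)"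
    (is "?K = _")
proof
  show "?K \<subseteq> convex_cone hull (g ` I)"
    using nonneg_combination_in_convex_cone_hull[OF assms] by blast
next
  have "convex_cone ?K"
    unfolding convex_cone_iff
  proof (intro conjI ballI allI impI)
    show "0 \<in> ?K"
      by (rule CollectI, rule exI[of _ "\<lambda>_. 0"]) simp
  next
    fix x y assume "x \<in> ?K" "y \<in> ?K"
    then obtain a b where "x = (\<Sum>i\<in>I. a i *\<^sub>R g i)" "\<forall>i\<in>I. 0 \<le> a i"
      and "y = (\<Sum>i\<in>I. b i *\<^sub>R g i)" "\<forall>i\<in>I. 0 \<le> b i"
      by blast
    then show "x + y \<in> ?K"
      by (intro CollectI exI[of _ "\<lambda>i. a i + b i"]) (simp add: scaleR_add_left sum.distrib)
  next
    fix x and c :: real assume "x \<in> ?K" "0 \<le> c"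
    then obtain a where "x = (\<Sum>i\<in>I. a i *\<^sub>R g i)" "\<forall>i\<in>I. 0 \<le> a i"
      by blast
    then show "c *\<^sub>R x \<in> ?K"
      using \<open>0 \<le> c\<close> by (intro CollectI exI[of _ "\<lambda>i. c * a i"]) (simp add: scaleR_sum_right)
  qed
  moreover have "g j \<in> ?K" if "j \<in> I" for j
  proof -
    have "(\<Sum>i\<in>I. (if i = j then 1 else 0) *\<^sub>R g i) = (\<Sum>i\<in>I. if i = j then g i else 0)"
      by (rule sum.cong) auto
    also have "\<dots> = g j"
      using that assms by simp
    finally have "(\<Sum>i\<in>I. (if i = j then 1 else 0) *\<^sub>R g i) = g j" .
    then show ?thesis
      by (intro CollectI exI[of _ "\<lambda>i. if i = j then 1 else 0"]) auto
  qed
  ultimately show "convex_cone hull (g ` I) \<subseteq> ?K"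
    by (intro hull_minimal) auto
qed

lemma closed_conic_abs_inner_ratio_attains_max:
  fixes K :: "'a::euclidean_space set"
  assumes "closed K" "conic K" "x \<in> K" "x \<noteq> 0"
  shows "\<exists>x0\<in>K. x0 \<noteq> 0 \<and> (\<forall>y\<in>K. y \<noteq> 0 \<longrightarrow> \<bar>c \<bullet> y\<bar> / norm y \<le> \<bar>c \<bullet> x0\<bar> / norm x0)"
proof -
  define S where "S = K \<inter> sphere 0 1"
  have normalize_in_S: "y /\<^sub>R norm y \<in> S" if "y \<in> K" "y \<noteq> 0" for y
    using conicD[OF assms(2) that(1), of "inverse (norm y)"] that(2) by (simp add: S_def)
  have "compact S"
    unfolding S_def using assms(1) by (intro closed_Int_compact compact_sphere)
  moreover have "S \<noteq> {}"
    using normalize_in_S[OF assms(3,4)] by blast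
  moreover have "continuous_on S (\<lambda>y. \<bar>c \<bullet> y\<bar>)"
    by (intro continuous_intros)
  ultimately obtain x0 where x0: "x0 \<in> S" "\<forall>y\<in>S. \<bar>c \<bullet> y\<bar> \<le> \<bar>c \<bullet> x0\<bar>"
    using continuous_attains_sup by blast
  have "\<bar>c \<bullet> y\<bar> / norm y \<le> \<bar>c \<bullet> x0\<bar> / norm x0" if "y \<in> K" "y \<noteq> 0" for y
  proof -
    have "\<bar>c \<bullet> (y /\<^sub>R norm y)\<bar> \<le> \<bar>c \<bullet> x0\<bar>"
      using x0(2) normalize_in_S[OF that] by blast
    then show ?thesis
      using x0(1) by (simp add: S_def abs_mult divide_inverse mult.commute)
  qed
  moreover have "x0 \<in> K" "x0 \<noteq> 0"
    using x0(1) by (auto simp: S_def)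
  ultimately show ?thesis by blast
qed

lemma abs_inner_ratio_orthogonal_shift_le:
  fixes c g u :: "'a::real_inner"
  assumes "c \<bullet> u = 0" "g \<bullet> u = 0"
  shows "\<bar>c \<bullet> (g + b *\<^sub>R u)\<bar> / norm (g + b *\<^sub>R u) \<le> \<bar>c \<bullet> g\<bar> / norm g"
proof (cases "g = 0")
  case True
  then show ?thesis using assms(1) by simp
next
  case False
  have "orthogonal g (b *\<^sub>R u)"
    using assms(2) by (simp add: orthogonal_def)
  then have "(norm g)\<^sup>2 \<le> (norm (g + b *\<^sub>R u))\<^sup>2"
    by (simp add: norm_add_Pythagorean)
  then have "norm g \<le> norm (g + b *\<^sub>R u)"
    by (rule power2_le_imp_le) simp
  then have "\<bar>c \<bullet> g\<bar> / norm (g + b *\<^sub>R u) \<le> \<bar>c \<bullet> g\<bar> / norm g"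
    using False by (intro divide_left_mono) (auto intro!: mult_pos_pos)
  moreover have "c \<bullet> (g + b *\<^sub>R u) = c \<bullet> g"
    using assms(1) by (simp add: inner_add_right)
  ultimately show ?thesis
    by simp
qed

lemma inner_one_one: "(1 :: real^'w::finite) \<bullet> 1 = real CARD('w)"
  by (simp add: inner_vec_def)

lemma centered_inner_one: "centered g \<bullet> (1 :: real^'w::finite) = 0"
  by (simp add: centered_def inner_diff_left inner_one_one)

lemma prob_mass_inner_one: "is_prob_mass p \<Longrightarrow> p \<bullet> 1 = 1"
  by (simp add: is_prob_mass_def inner_vec_def)

lemma hvec_inner_one: "hvec I f \<alpha> 0 \<bullet> 1 = 0"
  by (simp add: hvec_def inner_sum_left centered_inner_one)

lemma hvec_shift: "hvec I f \<alpha> \<beta> = hvec I f \<alpha> 0 + \<beta> *\<^sub>R 1"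
  by (simp add: hvec_def)

lemma dev_ratio_eq: "dev_ratio E P g = \<bar>(E - P) \<bullet> g\<bar> / norm g"
  by (simp add: dev_ratio_def inner_diff_left)

theorem corollary4:
  fixes n :: nat and f :: "nat \<Rightarrow> real^'w::finite" and E P :: "real^'w"
    and I :: "nat set"
  assumes M_nonempty: "credal_set n f \<noteq> {}"
    and M_prob: "\<forall>p\<in>credal_set n f. is_prob_mass p"
    and E_in: "E \<in> credal_set n f"
    and I_def: "I = {i. i < n \<and> E \<bullet> f i = 0}"
    and P_prob: "is_prob_mass P"
    and nondeg: "\<exists>\<alpha>. (\<forall>i\<in>I. \<alpha> i \<ge> 0) \<and> hvec I f \<alpha> 0 \<noteq> 0"
  shows "\<exists>m.
     m \<in> {dev_ratio E P (hvec I f \<alpha> \<beta>) | \<alpha> \<beta>. (\<forall>i\<in>I. \<alpha> i \<ge> 0) \<and> hvec I f \<alpha> \<beta> \<noteq> 0}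
   \<and> (\<forall>x\<in>{dev_ratio E P (hvec I f \<alpha> \<beta>) | \<alpha> \<beta>. (\<forall>i\<in>I. \<alpha> i \<ge> 0) \<and> hvec I f \<alpha> \<beta> \<noteq> 0}. x \<le> m)
   \<and> m \<in> {dev_ratio E P (hvec I f \<alpha> 0) | \<alpha>. (\<forall>i\<in>I. \<alpha> i \<ge> 0) \<and> hvec I f \<alpha> 0 \<noteq> 0}
   \<and> (\<forall>x\<in>{dev_ratio E P (hvec I f \<alpha> 0) | \<alpha>. (\<forall>i\<in>I. \<alpha> i \<ge> 0) \<and> hvec I f \<alpha> 0 \<noteq> 0}. x \<le> m)"
proof -
  define K where "K = {hvec I f \<alpha> 0 | \<alpha>. \<forall>i\<in>I. 0 \<le> \<alpha> i}"
  have "finite I" unfolding I_def by auto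
  then have K_hull: "K = convex_cone hull ((\<lambda>i. centered (f i)) ` I)"
    unfolding K_def hvec_def by (simp add: nonneg_combinations_eq_convex_cone_hull)
  have "closed K" "conic K"
    unfolding K_hull using \<open>finite I\<close> by (auto intro: closed_convex_cone_hull conic_convex_cone_hull)
  then obtain x0 where "x0 \<in> K" "x0 \<noteq> 0"
    and x0_max: "\<forall>y\<in>K. y \<noteq> 0 \<longrightarrow> dev_ratio E P y \<le> dev_ratio E P x0"
    using closed_conic_abs_inner_ratio_attains_max[of K _ "E - P"] nondeg
    unfolding dev_ratio_eq K_def by blast
  have "(E - P) \<bullet> 1 = 0"
    using E_in P_prob by (simp add: credal_set_def inner_diff_left prob_mass_inner_one)
  then have "dev_ratio E P (hvec I f \<alpha> \<beta>) \<le> dev_ratio E P (hvec I f \<alpha> 0)" for \<alpha> \<beta>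
    unfolding dev_ratio_eq hvec_shift[of I f \<alpha> \<beta>]
    by (intro abs_inner_ratio_orthogonal_shift_le hvec_inner_one)
  moreover have "dev_ratio E P (hvec I f \<alpha> 0) \<le> dev_ratio E P x0" if "\<forall>i\<in>I. 0 \<le> \<alpha> i" for \<alpha>
    using x0_max that by (cases "hvec I f \<alpha> 0 = 0") (auto simp: K_def dev_ratio_def)
  ultimately have bound: "dev_ratio E P (hvec I f \<alpha> \<beta>) \<le> dev_ratio E P x0"
    if "\<forall>i\<in>I. 0 \<le> \<alpha> i" for \<alpha> \<beta>
    using that order_trans by blast
  obtain \<alpha>0 where "\<forall>i\<in>I. 0 \<le> \<alpha>0 i" "x0 = hvec I f \<alpha>0 0"
    using \<open>x0 \<in> K\<close> unfolding K_def by blast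
  then show ?thesis
    using \<open>x0 \<noteq> 0\<close> bound by (intro exI[of _ "dev_ratio E P x0"]) blast
qed

end
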